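(* Let $\mathfrak{F}=\langle W,\{W_{\mathfrak{d}^{\alpha_i}_j}\},\{W_{\mathfrak{e}^{\alpha_i}}\},R_\Box,R_{\mathsf{A}},R_\blacksquare,R_{\mathsf{H}}\rangle$ be any $\mathsf{TLAE}$-frame. Then for every $w\in W$: $(w,w)\notin R_\blacksquare$, $(w,w)\notin R_\Box$, $(w,w)\notin R_{\mathsf{H}}$, and $(w,w)\notin R_{\mathsf{A}}$.
   Context: Fix finite sets $\mathtt{Action}=\{\delta_1,\dots,\delta_n\}$ (atomic action types) and $\mathtt{Agent}=\{\alpha_1,\dots,\alpha_m\}$ (agents). The set $\mathtt{Action}^*$ of action types is generated by $\Delta::=\delta_j\mid\Delta\cup\Delta\mid\overline{\Delta}$. For each agent $\alpha_i$ and each $j$ there is a propositional constant $\mathfrak{d}^{\alpha_i}_j$ and for each agent $\alpha_i$ a propositional constant $\mathfrak{e}^{\alpha_i}$. The translation $t$ is: $t(\delta_j^{\alpha_i})=\mathfrak{d}^{\alpha_i}_j$, $t(\overline{\Delta}^{\alpha_i})=\neg t(\Delta^{\alpha_i})$, $t(\Delta^{\alpha_i}\cup\Gamma^{\alpha_k})=t(\Delta^{\alpha_i})\vee t(\Gamma^{\alpha_k})$. An $\mathcal{L}$-frame is a tuple $\langle W,\{W_{\mathfrak{d}^{\alpha_i}_j}\}_{i,j},\{W_{\mathfrak{e}^{\alpha_i}}\}_{i},R_\Box,R_{\mathsf{A}},R_\blacksquare,R_{\mathsf{H}}\rangle$ where $W$ is a set of moments, each $W_{\mathfrak{d}^{\alpha_i}_j},W_{\mathfrak{e}^{\alpha_i}}\subseteq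 W$, and $R_\Box,R_{\mathsf{A}},R_\blacksquare,R_{\mathsf{H}}$ are binary relations on $W$. For action types define $W_{t(\delta_j^{\alpha_i})}=W_{\mathfrak{d}^{\alpha_i}_j}$, $W_{t(\overline{\Delta}^{\alpha_i})}=W\setminus W_{t(\Delta^{\alpha_i})}$, $W_{t(\Delta^{\alpha_i}\cup\Gamma^{\alpha_k})}=W_{t(\Delta^{\alpha_i})}\cup W_{t(\Gamma^{\alpha_k})}$. A $\mathsf{TLAE}$-frame is an $\mathcal{L}$-frame satisfying: (pA3) if $R_{\mathsf{A}}wu$ and $R_{\mathsf{A}}wv$ then $u=v$; (pA4) if $R_{\mathsf{A}}wu$ then $R_\Box wu$; (pA5) for every $w$, all pairwise distinct agents $\alpha_{1},\dots,\alpha_{k}$ and (not necessarily distinct) $\Delta_1,\dots,\Delta_k\in\mathtt{Action}^*$: if for each $i$ there is $u_i$ with $R_\Box wu_i$ and $u_i\in W_{t(\Delta_i^{\alpha_i})}$, then there is $v$ with $R_\Box wv$ and $v\in W_{t(\Delta_1^{\alpha_1})}\cap\dots\cap W_{t(\Delta_k^{\alpha_k})}$; (pA6) for every $w$ and agent $\alpha_i$: if some $v$ with $R_\Box wv$ lies in $W_{\mathfrak{e}^{\alpha_i}}$, then some $u$ with $R_\Box wu$ lies outside $W_{\mathfrak{e}^{\alpha_i}}$; (pA10;A11) $R_\Box wv$ iff $R_\blacksquare vw$; (pA12) if $R_\blacksquare wu$ and $R_\blacksquare wv$ then $u=v$; (pA9;A14) $R_{\mathsf{H}}$ is the transitive closure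 of $R_\blacksquare$; (pA13) for every $w$, either there is no $v$ with $R_{\mathsf{H}}wv$, or there is $u$ with $R_{\mathsf{H}}wu$ such that there is no $z$ with $R_{\mathsf{H}}uz$. *)

theory Defs
  imports Main
begin

datatype 'ac action_type = Atom 'ac | AUn "'ac action_type" "'ac action_type" | ACompl "'ac action_type"

fun ext :: "'w set \<Rightarrow> ('ag \<Rightarrow> 'ac \<Rightarrow> 'w set) \<Rightarrow> 'ag \<Rightarrow> 'ac action_type \<Rightarrow> 'w set" where
  "ext W D a (Atom j) = D a j"
| "ext W D a (ACompl d) = W - ext W D a d"
| "ext W D a (AUn d g) = ext W D a d \<union> ext W D a g"

text \<open>L-frame: W, sets D a j = W_{d^a_j}, E a = W_{e^a},
  relations RBox, RA, RBlack (black box), RH on W.\<close>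
definition L_frame ::
  "'w set \<Rightarrow> ('ag::finite \<Rightarrow> 'ac::finite \<Rightarrow> 'w set) \<Rightarrow> ('ag \<Rightarrow> 'w set)
   \<Rightarrow> ('w \<Rightarrow> 'w \<Rightarrow> bool) \<Rightarrow> ('w \<Rightarrow> 'w \<Rightarrow> bool) \<Rightarrow> ('w \<Rightarrow> 'w \<Rightarrow> bool) \<Rightarrow> ('w \<Rightarrow> 'w \<Rightarrow> bool) \<Rightarrow> bool"
  where
  "L_frame W D E RBox RA RBlack RH \<longleftrightarrow>
     (\<forall>a j. D a j \<subseteq> W) \<and> (\<forall>a. E a \<subseteq> W) \<and>
     (\<forall>R \<in> {RBox, RA, RBlack, RH}. \<forall>x y. R x y \<longrightarrow> x \<in> W \<and> y \<in> W)"

definition TLAE_frame ::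
  "'w set \<Rightarrow> ('ag::finite \<Rightarrow> 'ac::finite \<Rightarrow> 'w set) \<Rightarrow> ('ag \<Rightarrow> 'w set)
   \<Rightarrow> ('w \<Rightarrow> 'w \<Rightarrow> bool) \<Rightarrow> ('w \<Rightarrow> 'w \<Rightarrow> bool) \<Rightarrow> ('w \<Rightarrow> 'w \<Rightarrow> bool) \<Rightarrow> ('w \<Rightarrow> 'w \<Rightarrow> bool) \<Rightarrow> bool"
  where
  "TLAE_frame W D E RBox RA RBlack RH \<longleftrightarrow>
     L_frame W D E RBox RA RBlack RH \<and>
     \<comment> \<open>pA3\<close>
     (\<forall>w u v. RA w u \<and> RA w v \<longrightarrow> u = v) \<and>
     \<comment> \<open>pA4\<close>
     (\<forall>w u. RA w u \<longrightarrow> RBox w u) \<and>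
     \<comment> \<open>pA5: agents as (pairwise distinct, k \<ge> 1), action types ds\<close>
     (\<forall>w \<in> W. \<forall>(as :: 'ag list) (ds :: 'ac action_type list).
        as \<noteq> [] \<and> distinct as \<and> length ds = length as \<and>
        (\<forall>i < length as. \<exists>u. RBox w u \<and> u \<in> ext W D (as ! i) (ds ! i)) \<longrightarrow>
        (\<exists>v. RBox w v \<and> (\<forall>i < length as. v \<in> ext W D (as ! i) (ds ! i)))) \<and>
     \<comment> \<open>pA6\<close>
     (\<forall>w \<in> W. \<forall>a. (\<exists>v. RBox w v \<and> v \<in> E a) \<longrightarrow> (\<exists>u. RBox w u \<and> u \<notin> E a)) \<and>
     \<comment> \<open>pA10;A11\<close>
     (\<forall>w v. RBox w v \<longleftrightarrow> RBlack v w) \<and>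
     \<comment> \<open>pA12\<close>
     (\<forall>w u v. RBlack w u \<and> RBlack w v \<longrightarrow> u = v) \<and>
     \<comment> \<open>pA9;A14\<close>
     RH = tranclp RBlack \<and>
     \<comment> \<open>pA13\<close>
     (\<forall>w \<in> W. (\<not> (\<exists>v. RH w v)) \<or> (\<exists>u. RH w u \<and> \<not> (\<exists>z. RH u z)))"

end

theory Submission
  imports Defs
begin

text \<open>In a frame the backward-time relation is functional, so from a moment on a
  loop there is a single path, and it runs around the loop forever: every moment
  in the past of a looping moment has a further past. This contradicts the
  existence of an earliest past moment required by pA13.\<close>

lemma right_unique_cycle_returns:
  assumes "right_unique R" and "R\<^sup>+\<^sup>+ w w" and "R\<^sup>+\<^sup>+ w u"
  shows "R\<^sup>*\<^sup>* u w"
  using \<open>R\<^sup>+\<^sup>+ w u\<close>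
proof (induction rule: tranclp_induct)
  case (base y)
  from \<open>R\<^sup>+\<^sup>+ w w\<close> obtain z where "R w z" "R\<^sup>*\<^sup>* z w"
    by (blast dest: tranclpD)
  with base \<open>right_unique R\<close> have "y = z"
    by (blast dest: right_uniqueD)
  with \<open>R\<^sup>*\<^sup>* z w\<close> show ?case
    by simp
next
  case (step y v)
  from step.IH \<open>R\<^sup>+\<^sup>+ w w\<close> have "R\<^sup>+\<^sup>+ y w"
    by (rule rtranclp_tranclp_tranclp)
  then obtain z where "R y z" "R\<^sup>*\<^sup>* z w"
    by (blast dest: tranclpD)
  with step.hyps(2) \<open>right_unique R\<close> have "v = z"
    by (blast dest: right_uniqueD)
  with \<open>R\<^sup>*\<^sup>* z w\<close> show ?case
    by simp
qed

lemma tranclp_not_refl_if_endpoint: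
  assumes "right_unique R"
    and endpoint: "\<not> (\<exists>v. R\<^sup>+\<^sup>+ w v) \<or> (\<exists>u. R\<^sup>+\<^sup>+ w u \<and> \<not> (\<exists>z. R\<^sup>+\<^sup>+ u z))"
  shows "\<not> R\<^sup>+\<^sup>+ w w"
proof
  assume loop: "R\<^sup>+\<^sup>+ w w"
  with endpoint obtain u where u: "R\<^sup>+\<^sup>+ w u" and last: "\<not> (\<exists>z. R\<^sup>+\<^sup>+ u z)"
    by blast
  from \<open>right_unique R\<close> loop u have "R\<^sup>*\<^sup>* u w"
    by (rule right_unique_cycle_returns)
  then have "R\<^sup>+\<^sup>+ u w"
    using loop by (rule rtranclp_tranclp_tranclp)
  with last show False
    by blast
qed

theorem mainTheorem1:
  fixes W :: "'w set" and D :: "'ag::finite \<Rightarrow> 'ac::finite \<Rightarrow> 'w set" and E :: "'ag \<Rightarrow> 'w set"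
    and RBox RA RBlack RH :: "'w \<Rightarrow> 'w \<Rightarrow> bool"
  assumes "TLAE_frame W D E RBox RA RBlack RH"
  shows "\<forall>w \<in> W. \<not> RBlack w w \<and> \<not> RBox w w \<and> \<not> RH w w \<and> \<not> RA w w"
proof
  fix w
  assume "w \<in> W"
  have unique: "\<forall>w u v. RBlack w u \<and> RBlack w v \<longrightarrow> u = v"
    and H: "RH = RBlack\<^sup>+\<^sup>+"
    and box: "\<forall>w v. RBox w v \<longleftrightarrow> RBlack v w"
    and A: "\<forall>w u. RA w u \<longrightarrow> RBox w u"
    and endpoint: "\<not> (\<exists>v. RH w v) \<or> (\<exists>u. RH w u \<and> \<not> (\<exists>z. RH u z))"
    using assms \<open>w \<in> W\<close> unfolding TLAE_frame_def by blast+
  from unique have functional: "right_unique RBlack"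
    by (auto intro: right_uniqueI)
  have "\<not> RH w w"
    using tranclp_not_refl_if_endpoint[OF functional] endpoint H by simp
  then have "\<not> RBlack w w"
    using H by auto
  then show "\<not> RBlack w w \<and> \<not> RBox w w \<and> \<not> RH w w \<and> \<not> RA w w"
    using \<open>\<not> RH w w\<close> box A by blast
qed

end
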